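(* Let $(X,\alpha)$ be a Cantor minimal system, $m\ge1$, and let $c:X\to\mathbb{Z}_m$ be a continuous function. Suppose that $\alpha\times c$, $(x,k)\mapsto(\alpha(x),k+c(x))$, is a minimal homeomorphism of $X\times\mathbb{Z}_m$. Then \[ T\big(K^0(X\times\mathbb{Z}_m,\alpha\times c)/\pi^*(K^0(X,\alpha))\big)\cong\mathbb{Z}_m, \] and a generator of this group is the image of the class of the $\mathbb{Z}$-valued continuous function \[ f_0(x,k)=\begin{cases}1 & c(\alpha^{-1}(x))\neq0\text{ and }k\in\{0,1,\dots,c(\alpha^{-1}(x))-1\},\\ 0&\text{otherwise}.\end{cases} \]
   Context: A Cantor minimal system $(X,\alpha)$ is a Cantor set $X$ with a homeomorphism $\alpha$ having no nontrivial closed invariant subsets. $\mathbb{Z}_m=\mathbb{Z}/m\mathbb{Z}$, identified with $\{0,1,\dots,m-1\}$. For a minimal homeomorphism $\gamma$ of a Cantor set $Z$, $K^0(Z,\gamma)=C(Z,\mathbb{Z})/\{f-f\circ\gamma^{-1}:f\in C(Z,\mathbb{Z})\}$. $\pi:X\times\mathbb{Z}_m\to X$ is the first-coordinate projection and $\pi^*:K^0(X,\alpha)\to K^0(X\times\mathbb{Z}_m,\alpha\times c)$ is $[g]\mapsto[g\circ\pi]$. $T(G)$ denotes the torsion subgroup of an abelian group $G$. *)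

theory Defs
  imports "HOL-Analysis.Analysis" "HOL-Algebra.Elementary_Groups"
begin

definition cantor_set :: "'a::metric_space set \<Rightarrow> bool" where
  "cantor_set X \<longleftrightarrow> X \<noteq> {} \<and> compact X \<and> (\<forall>x\<in>X. x islimpt X)
     \<and> (\<forall>x\<in>X. connected_component_set X x = {x})"

definition minimal_homeo :: "'a::topological_space set \<Rightarrow> ('a \<Rightarrow> 'a) \<Rightarrow> bool" where
  "minimal_homeo Z \<gamma> \<longleftrightarrow> (\<exists>\<gamma>'. homeomorphism Z Z \<gamma> \<gamma>') \<and>
     (\<forall>F. F \<subseteq> Z \<and> closedin (top_of_set Z) F \<and> \<gamma> ` F = F \<longrightarrow> F = {} \<or> F = Z)"

text \<open>The additive group C(Z,int) of continuous integer-valued functions on Z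
  (functions are taken to be 0 outside Z, so that they are determined by their values on Z).\<close>
definition CZ :: "'a::topological_space set \<Rightarrow> ('a \<Rightarrow> int) monoid" where
  "CZ Z = \<lparr>carrier = {f. continuous_on Z f \<and> (\<forall>x. x \<notin> Z \<longrightarrow> f x = 0)},
           monoid.mult = (\<lambda>f g x. f x + g x), one = (\<lambda>x. 0)\<rparr>"

definition cobound :: "'a::topological_space set \<Rightarrow> ('a \<Rightarrow> 'a) \<Rightarrow> ('a \<Rightarrow> int) set" where
  "cobound Z \<gamma> = (\<lambda>f x. if x \<in> Z then f x - f (inv_into Z \<gamma> x) else 0) ` carrier (CZ Z)"

definition K0 :: "'a::topological_space set \<Rightarrow> ('a \<Rightarrow> 'a) \<Rightarrow> ('a \<Rightarrow> int) set monoid" where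
  "K0 Z \<gamma> = CZ Z Mod cobound Z \<gamma>"

definition skew :: "('a \<Rightarrow> 'a) \<Rightarrow> ('a \<Rightarrow> int) \<Rightarrow> nat \<Rightarrow> 'a \<times> int \<Rightarrow> 'a \<times> int" where
  "skew \<alpha> c m = (\<lambda>(x,k). (\<alpha> x, (k + c x) mod int m))"

definition Zm :: "nat \<Rightarrow> int set" where
  "Zm m = {0..<int m}"

text \<open>pi^* : K^0(X,alpha) -> K^0(X x Z_m, alpha x c), [g] |-> [g o pi].\<close>
definition pistar :: "'a::topological_space set \<Rightarrow> ('a \<Rightarrow> 'a) \<Rightarrow> ('a \<Rightarrow> int) \<Rightarrow> nat
     \<Rightarrow> ('a \<Rightarrow> int) set \<Rightarrow> ('a \<times> int \<Rightarrow> int) set" where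
  "pistar X \<alpha> c m A =
     (let g = (SOME g. g \<in> A);
          gpi = (\<lambda>p. if p \<in> X \<times> Zm m then g (fst p) else 0)
      in cobound (X \<times> Zm m) (skew \<alpha> c m) #>\<^bsub>CZ (X \<times> Zm m)\<^esub> gpi)"

definition torsion :: "('a, 'b) monoid_scheme \<Rightarrow> ('a, 'b) monoid_scheme" where
  "torsion G = G\<lparr>carrier := {x \<in> carrier G. \<exists>n::nat. n > 0 \<and> x [^]\<^bsub>G\<^esub> n = \<one>\<^bsub>G\<^esub>}\<rparr>"

definition pistar_image :: "'a::topological_space set \<Rightarrow> ('a \<Rightarrow> 'a) \<Rightarrow> ('a \<Rightarrow> int) \<Rightarrow> nat
     \<Rightarrow> ('a \<times> int \<Rightarrow> int) set set" where
  "pistar_image X \<alpha> c m = pistar X \<alpha> c m ` carrier (K0 X \<alpha>)"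

definition Kquot :: "'a::topological_space set \<Rightarrow> ('a \<Rightarrow> 'a) \<Rightarrow> ('a \<Rightarrow> int) \<Rightarrow> nat
     \<Rightarrow> ('a \<times> int \<Rightarrow> int) set set monoid" where
  "Kquot X \<alpha> c m = K0 (X \<times> Zm m) (skew \<alpha> c m) Mod pistar_image X \<alpha> c m"

definition qclass :: "'a::topological_space set \<Rightarrow> ('a \<Rightarrow> 'a) \<Rightarrow> ('a \<Rightarrow> int) \<Rightarrow> nat
     \<Rightarrow> ('a \<times> int \<Rightarrow> int) \<Rightarrow> ('a \<times> int \<Rightarrow> int) set set" where
  "qclass X \<alpha> c m f = pistar_image X \<alpha> c m #>\<^bsub>K0 (X \<times> Zm m) (skew \<alpha> c m)\<^esub>
       (cobound (X \<times> Zm m) (skew \<alpha> c m) #>\<^bsub>CZ (X \<times> Zm m)\<^esub> f)"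

end

(*
  Write Y = X x Z_m and beta = alpha x c, and let W be the subgroup of C(Y,Z) spanned by the
  lifts g o pi of functions on X and by the beta-coboundaries; the group in question is the
  torsion of C(Y,Z)/W.  Since m f0(x,k) = c(alpha^-1 x) - k + (k - c(alpha^-1 x)) mod m, the
  multiple m f0 lies in W.  Conversely, let n f = g o pi + u - u o beta^-1.  Modulo n, the
  increment of u along the fibre rotation k -> k + 1 is continuous and beta-invariant, hence a
  constant t by minimality of beta; so u is affine in k with slope t modulo n, and removing this
  affine part shows that f + (m t / n) f0 lies in W.  The same argument with n = 0 shows that
  i f0 is not in W for 0 < i < m.
*)

theory Submission
  imports Defs "HOL-Algebra.Multiplicative_Group"
begin

section \<open>Quotients and torsion in abelian groups\<close>

lemma (in comm_group) double_quotient: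
  assumes H: "subgroup H G" and W: "subgroup W G" and HW: "H \<subseteq> W"
  defines "Q \<equiv> (G Mod H) Mod ((\<lambda>w. H #> w) ` W)"
    and "\<phi> \<equiv> \<lambda>f. ((\<lambda>w. H #> w) ` W) #>\<^bsub>G Mod H\<^esub> (H #> f)"
  shows "comm_group Q" and "group_hom G Q \<phi>" and "\<phi> ` carrier G = carrier Q"
    and "kernel G Q \<phi> = W"
proof -
  let ?K = "G Mod H" and ?P = "(\<lambda>w. H #> w) ` W"
  interpret K: comm_group ?K
    using H by (rule abelian_FactGroup)
  have proj: "(\<lambda>f. H #> f) \<in> hom G ?K"
    using H by (simp add: normal.r_coset_hom_Mod subgroup_imp_normal)
  have P: "subgroup ?P ?K"
    using proj K.is_group is_group
    by (intro group_hom.subgroup_img_is_subgroup[OF _ W])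
      (simp add: group_hom_def group_hom_axioms_def)
  have proj2: "(\<lambda>A. ?P #>\<^bsub>?K\<^esub> A) \<in> hom ?K Q"
    unfolding Q_def using P by (simp add: normal.r_coset_hom_Mod K.subgroup_imp_normal)
  show Q: "comm_group Q"
    unfolding Q_def using P by (rule K.abelian_FactGroup)
  have "\<phi> \<in> hom G Q"
    using Group.hom_compose[OF proj proj2] by (simp add: \<phi>_def o_def)
  then show "group_hom G Q \<phi>"
    using Q by (simp add: group_hom_def group_hom_axioms_def is_group comm_group.axioms(2))
  show "\<phi> ` carrier G = carrier Q"
    unfolding \<phi>_def Q_def by (simp add: carrier_FactGroup image_image)
  have "\<phi> f = \<one>\<^bsub>Q\<^esub> \<longleftrightarrow> f \<in> W" if f: "f \<in> carrier G" for f
  proof -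
    have Hf: "H #> f \<in> carrier ?K"
      using proj f by (auto simp: hom_def)
    have "\<phi> f = \<one>\<^bsub>Q\<^esub> \<longleftrightarrow> H #> f \<in> ?P"
      unfolding \<phi>_def Q_def
      using K.rcos_self[OF Hf P] subgroup.rcos_const[OF P K.is_group] by auto
    also have "\<dots> \<longleftrightarrow> f \<in> W"
    proof
      assume "H #> f \<in> ?P"
      then obtain w where w: "w \<in> W" "H #> f = H #> w"
        by auto
      then obtain h where "h \<in> H" "f = h \<otimes> w"
        using rcos_self[OF f H] unfolding r_coset_def by auto
      then show "f \<in> W"
        using HW w(1) subgroup.m_closed[OF W] by blast
    qed auto
    finally show ?thesis .
  qed
  then show "kernel G Q \<phi> = W"
    unfolding kernel_def using subgroup.subset[OF W] by auto
qed

lemma (in group) iso_integer_mod_group_powers: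
  assumes a: "a \<in> carrier G" and "ord a = m" "m > 0"
  shows "(\<lambda>i. a [^] i) \<in> iso (integer_mod_group m) (G\<lparr>carrier := range (\<lambda>i::int. a [^] i)\<rparr>)"
proof -
  have pow_eq: "a [^] i = a [^] j \<longleftrightarrow> int m dvd (j - i)" for i j :: int
    using a assms(2) by (simp add: int_pow_eq)
  have carrier_Zm: "carrier (integer_mod_group m) = {0..<int m}"
    using \<open>m > 0\<close> by (simp add: carrier_integer_mod_group)
  show ?thesis
  proof (rule isoI)
    show "(\<lambda>i. a [^] i) \<in> hom (integer_mod_group m) (G\<lparr>carrier := range (\<lambda>i::int. a [^] i)\<rparr>)"
    proof (rule homI)
      fix i j assume "i \<in> carrier (integer_mod_group m)" "j \<in> carrier (integer_mod_group m)"
      have "a [^] ((i + j) mod int m) = a [^] (i + j)"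
        using pow_eq[of "(i + j) mod int m" "i + j"] by simp
      then show "a [^] (i \<otimes>\<^bsub>integer_mod_group m\<^esub> j)
          = a [^] i \<otimes>\<^bsub>G\<lparr>carrier := range (\<lambda>i::int. a [^] i)\<rparr>\<^esub> a [^] j"
        using a by (simp add: int_pow_mult)
    qed auto
    show "bij_betw (\<lambda>i. a [^] i) (carrier (integer_mod_group m))
        (carrier (G\<lparr>carrier := range (\<lambda>i::int. a [^] i)\<rparr>))"
      unfolding carrier_Zm
    proof (rule bij_betw_imageI)
      show "inj_on (\<lambda>i. a [^] i) {0..<int m}"
      proof (rule inj_onI)
        fix i j assume "i \<in> {0..<int m}" "j \<in> {0..<int m}" "a [^] i = a [^] j"
        then have "int m dvd (j - i)" "\<bar>j - i\<bar> < int m"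
          by (auto simp: pow_eq)
        then show "i = j"
          using dvd_imp_le_int[of "j - i" "int m"] by (cases "j = i") auto
      qed
      have "a [^] i \<in> (\<lambda>i. a [^] i) ` {0..<int m}" for i :: int
        using \<open>m > 0\<close> pow_eq[of "i mod int m" i]
        by (intro image_eqI[of _ _ "i mod int m"]) auto
      then show "(\<lambda>i. a [^] i) ` {0..<int m} = carrier (G\<lparr>carrier := range (\<lambda>i::int. a [^] i)\<rparr>)"
        by auto
    qed
  qed
qed

lemma (in comm_group) torsion_cyclic_of_order:
  assumes a: "a \<in> carrier G" and ord: "ord a = m" and m: "m > 0"
    and torsion_powers:
      "\<And>x n. x \<in> carrier G \<Longrightarrow> n > 0 \<Longrightarrow> x [^] (n::nat) = \<one> \<Longrightarrow> x \<in> range (\<lambda>i::int. a [^] i)"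
  shows "torsion G \<cong> integer_mod_group m \<and> a \<in> carrier (torsion G)
    \<and> generate (torsion G) {a} = carrier (torsion G)"
proof -
  let ?A = "range (\<lambda>i::int. a [^] i)" and ?T = "{x \<in> carrier G. \<exists>n::nat>0. x [^] n = \<one>}"
  have "?T = ?A"
  proof
    show "?T \<subseteq> ?A"
      using torsion_powers by blast
    show "?A \<subseteq> ?T"
    proof
      fix x assume "x \<in> ?A"
      then have "x \<in> carrier G" "x [^] m = \<one>"
        using a ord by (auto simp: int_pow_pow int_pow_eq_id simp flip: int_pow_int)
      then show "x \<in> ?T"
        using m by blast
    qed
  qed
  then have T: "torsion G = G\<lparr>carrier := ?A\<rparr>"
    unfolding torsion_def by simp
  have sub: "subgroup ?A G"
    using a by (rule subgroup_of_powers)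
  have aA: "a \<in> ?A"
    using a by (metis int_pow_1 rangeI)
  have "torsion G \<cong> integer_mod_group m"
    unfolding T
    by (rule group.iso_sym[OF group_integer_mod_group
          is_isoI[OF iso_integer_mod_group_powers[OF a ord m]]])
  moreover have "generate (torsion G) {a} = carrier (torsion G)"
  proof -
    interpret A: group "G\<lparr>carrier := ?A\<rparr>"
      using sub is_group by (rule subgroup.subgroup_is_group)
    have "generate (G\<lparr>carrier := ?A\<rparr>) {a} = {a [^]\<^bsub>G\<lparr>carrier := ?A\<rparr>\<^esub> (k::int) | k. k \<in> UNIV}"
      using aA by (intro A.generate_pow) simp
    then show ?thesis
      by (auto simp: T simp flip: int_pow_consistent[OF sub aA])
  qed
  ultimately show ?thesis
    using aA T by simp
qed

lemma (in group) rcos_mult_absorb: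
  assumes "subgroup H G" "h \<in> H" "a \<in> carrier G"
  shows "H #> (h \<otimes> a) = H #> a"
  using assms
  by (metis coset_mult_assoc is_group subgroup.mem_carrier subgroup.rcos_const subgroup.subset)

lemma (in group) ord_eqI:
  assumes "a \<in> carrier G" "m > 0" "a [^] m = \<one>" and "\<And>i. 0 < i \<Longrightarrow> i < m \<Longrightarrow> a [^] i \<noteq> \<one>"
  shows "ord a = m"
proof -
  have "ord a dvd m"
    using assms(1,3) by (simp add: pow_eq_id)
  then have "0 < ord a" "ord a \<le> m"
    using assms(2) by (auto intro: dvd_imp_le)
  moreover have "\<not> ord a < m"
    using assms(1) assms(4)[of "ord a"] \<open>0 < ord a\<close> by auto
  ultimately show ?thesis
    by simp
qed

section \<open>Continuous integer-valued functions\<close>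

lemma continuous_on_int_compose:
  assumes "continuous_on S (f :: _ \<Rightarrow> int)"
  shows "continuous_on S (\<lambda>x. h (f x))"
  using continuous_on_compose[OF assms Topological_Spaces.continuous_on_discrete[of _ h]]
  by (simp add: o_def)

lemma open_int_times_int: "open (A :: (int \<times> int) set)"
proof -
  have "open ({p} :: (int \<times> int) set)" for p
    using open_Times[OF open_discrete open_discrete, of "{fst p}" "{snd p}"] by simp
  then have "open (\<Union>p\<in>A. {p})" by blast
  then show ?thesis by simp
qed

lemma continuous_on_int_binop:
  assumes "continuous_on S (f :: _ \<Rightarrow> int)" "continuous_on S (g :: _ \<Rightarrow> int)"
  shows "continuous_on S (\<lambda>x. h (f x) (g x))"
proof -
  have "continuous_on UNIV (\<lambda>p :: int \<times> int. h (fst p) (snd p))"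
    by (simp add: continuous_on_open_vimage open_int_times_int)
  moreover have "continuous_on S (\<lambda>x. (f x, g x))"
    using assms by (intro continuous_intros)
  ultimately show ?thesis
    using continuous_on_compose2[of UNIV "\<lambda>p. h (fst p) (snd p)" S "\<lambda>x. (f x, g x)"] by simp
qed

lemma carrier_CZ: "f \<in> carrier (CZ Z) \<longleftrightarrow> continuous_on Z f \<and> (\<forall>x. x \<notin> Z \<longrightarrow> f x = 0)"
  by (simp add: CZ_def)

lemma mult_CZ [simp]: "f \<otimes>\<^bsub>CZ Z\<^esub> g = (\<lambda>x. f x + g x)"
  by (simp add: CZ_def)

lemma one_CZ [simp]: "\<one>\<^bsub>CZ Z\<^esub> = (\<lambda>x. 0)"
  by (simp add: CZ_def)

lemma restrict_in_CZ: "continuous_on Z f \<Longrightarrow> (\<lambda>x. if x \<in> Z then f x else 0) \<in> carrier (CZ Z)"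
  by (auto simp: carrier_CZ cong: continuous_on_cong)

lemma zero_in_CZ: "(\<lambda>x. 0) \<in> carrier (CZ Z)"
  by (simp add: carrier_CZ)

lemma add_in_CZ: "f \<in> carrier (CZ Z) \<Longrightarrow> g \<in> carrier (CZ Z) \<Longrightarrow> (\<lambda>x. f x + g x) \<in> carrier (CZ Z)"
  by (auto simp: carrier_CZ intro: continuous_on_int_binop)

lemma scale_in_CZ: "f \<in> carrier (CZ Z) \<Longrightarrow> (\<lambda>x. k * f x) \<in> carrier (CZ Z)"
  by (auto simp: carrier_CZ intro: continuous_on_int_compose)

lemma diff_in_CZ: "f \<in> carrier (CZ Z) \<Longrightarrow> g \<in> carrier (CZ Z) \<Longrightarrow> (\<lambda>x. f x - g x) \<in> carrier (CZ Z)"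
  using add_in_CZ[of f Z "\<lambda>x. (-1) * g x"] scale_in_CZ[of g Z "-1"] by simp

lemma div_in_CZ: "f \<in> carrier (CZ Z) \<Longrightarrow> (\<lambda>x. f x div k) \<in> carrier (CZ Z)"
  by (auto simp: carrier_CZ intro: continuous_on_int_compose)

lemma comm_group_CZ: "comm_group (CZ Z)"
proof (rule comm_groupI)
  fix f assume "f \<in> carrier (CZ Z)"
  then show "\<exists>g\<in>carrier (CZ Z). g \<otimes>\<^bsub>CZ Z\<^esub> f = \<one>\<^bsub>CZ Z\<^esub>"
    using scale_in_CZ[of f Z "-1"] by (intro bexI[of _ "\<lambda>x. (-1) * f x"]) auto
qed (auto intro: add_in_CZ zero_in_CZ)

interpretation CZ: comm_group "CZ Z"
  by (rule comm_group_CZ)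

lemma nat_pow_CZ: "f [^]\<^bsub>CZ Z\<^esub> (n::nat) = (\<lambda>x. int n * f x)"
  by (induction n) (auto simp: algebra_simps)

lemma continuous_on_compose_homeo:
  assumes "homeomorphism Z Z \<gamma> \<gamma>'" "continuous_on Z u"
  shows "continuous_on Z (\<lambda>x. u (\<gamma>' x))"
  using assms by (intro continuous_on_compose2[OF assms(2)]) (auto simp: homeomorphism_def)

definition coboundary :: "'a set \<Rightarrow> ('a \<Rightarrow> 'a) \<Rightarrow> ('a \<Rightarrow> int) \<Rightarrow> 'a \<Rightarrow> int" where
  "coboundary Z \<gamma>' u = (\<lambda>x. if x \<in> Z then u x - u (\<gamma>' x) else 0)"

lemma cobound_eq_coboundary:
  assumes "homeomorphism Z Z \<gamma> \<gamma>'"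
  shows "cobound Z \<gamma> = coboundary Z \<gamma>' ` carrier (CZ Z)"
proof -
  have "inj_on \<gamma> Z"
    using assms by (metis homeomorphism_def inj_on_inverseI)
  then have "inv_into Z \<gamma> x = \<gamma>' x" if "x \<in> Z" for x
    by (rule inv_into_f_eq) (use assms that in \<open>auto simp: homeomorphism_def\<close>)
  then show ?thesis
    unfolding cobound_def coboundary_def by (intro image_cong refl) auto
qed

lemma coboundary_in_CZ:
  assumes "homeomorphism Z Z \<gamma> \<gamma>'" "u \<in> carrier (CZ Z)"
  shows "coboundary Z \<gamma>' u \<in> carrier (CZ Z)"
proof -
  have "continuous_on Z (\<lambda>x. u x - u (\<gamma>' x))"
    using assms continuous_on_compose_homeo[OF assms(1)]
    by (intro continuous_on_int_binop[where h = "\<lambda>a b. a - b"]) (auto simp: carrier_CZ)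
  then show ?thesis
    unfolding coboundary_def by (rule restrict_in_CZ)
qed

lemma subgroup_cobound:
  assumes "homeomorphism Z Z \<gamma> \<gamma>'"
  shows "subgroup (cobound Z \<gamma>) (CZ Z)"
proof -
  have "group_hom (CZ Z) (CZ Z) (coboundary Z \<gamma>')"
    using assms
    by unfold_locales (auto intro!: homI coboundary_in_CZ, auto simp: coboundary_def)
  then show ?thesis
    unfolding cobound_eq_coboundary[OF assms] by (rule group_hom.img_is_subgroup)
qed

section \<open>The skew product\<close>

locale skew_product =
  fixes X :: "'a::topological_space set" and \<alpha> \<alpha>inv :: "'a \<Rightarrow> 'a" and c :: "'a \<Rightarrow> int"
    and m :: nat
  assumes X_nonempty: "X \<noteq> {}"
    and homeo_\<alpha>: "homeomorphism X X \<alpha> \<alpha>inv"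
    and m_pos: "m > 0"
    and continuous_c: "continuous_on X c" and c_range: "c ` X \<subseteq> Zm m"
    and minimal_skew: "minimal_homeo (X \<times> Zm m) (skew \<alpha> c m)"
begin

abbreviation Y :: "('a \<times> int) set" where
  "Y \<equiv> X \<times> Zm m"

abbreviation \<beta> :: "'a \<times> int \<Rightarrow> 'a \<times> int" where
  "\<beta> \<equiv> skew \<alpha> c m"

definition skew_inv :: "'a \<times> int \<Rightarrow> 'a \<times> int" where
  "skew_inv = (\<lambda>(x, k). (\<alpha>inv x, (k - c (\<alpha>inv x)) mod int m))"

definition rotate :: "'a \<times> int \<Rightarrow> 'a \<times> int" where
  "rotate = (\<lambda>(x, k). (x, (k + 1) mod int m))"

definition lift :: "('a \<Rightarrow> int) \<Rightarrow> 'a \<times> int \<Rightarrow> int" where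
  "lift g = (\<lambda>p. if p \<in> Y then g (fst p) else 0)"

text \<open>The subgroup \<open>\<pi>\<^sup>*C(X,\<int>) + (1 - \<beta>\<^sup>*)C(Y,\<int>)\<close>: by \<open>pistar_image_eq\<close> and
  \<open>double_quotient\<close>, \<open>Kquot\<close> is \<open>C(Y,\<int>)\<close> modulo this subgroup.\<close>

definition cohomologous_to_lifts :: "('a \<times> int \<Rightarrow> int) set" where
  "cohomologous_to_lifts = {\<lambda>p. coboundary Y skew_inv u p + lift g p | g u.
     g \<in> carrier (CZ X) \<and> u \<in> carrier (CZ Y)}"

lemma \<alpha>inv_in: "x \<in> X \<Longrightarrow> \<alpha>inv x \<in> X"
  using homeo_\<alpha> by (auto simp: homeomorphism_def)

lemma continuous_\<alpha>inv: "continuous_on X \<alpha>inv"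
  using homeo_\<alpha> by (simp add: homeomorphism_def)

lemma c_bounds: "x \<in> X \<Longrightarrow> 0 \<le> c x \<and> c x < int m"
  using c_range by (auto simp: Zm_def)

lemma skew_inv_in: "y \<in> Y \<Longrightarrow> skew_inv y \<in> Y"
  using m_pos by (auto simp: skew_inv_def Zm_def \<alpha>inv_in)

lemma fst_skew_inv: "fst (skew_inv y) = \<alpha>inv (fst y)"
  by (simp add: skew_inv_def split: prod.splits)

lemma skew_skew_inv: "y \<in> Y \<Longrightarrow> \<beta> (skew_inv y) = y"
  using homeo_\<alpha> \<alpha>inv_in
  by (auto simp: skew_inv_def skew_def Zm_def homeomorphism_def mod_add_left_eq)

lemma homeomorphism_skew: "homeomorphism Y Y \<beta> skew_inv"
proof -
  obtain g where g: "homeomorphism Y Y \<beta> g"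
    using minimal_skew by (auto simp: minimal_homeo_def)
  have "skew_inv y = g y" if "y \<in> Y" for y
    using g skew_inv_in[OF that] skew_skew_inv[OF that] by (metis homeomorphism_apply1)
  then show ?thesis
    using homeomorphism_cong[OF g] by simp
qed

lemma skew_inv_skew: "y \<in> Y \<Longrightarrow> skew_inv (\<beta> y) = y"
  using homeomorphism_skew by (simp add: homeomorphism_apply1)

lemma skew_in: "y \<in> Y \<Longrightarrow> \<beta> y \<in> Y"
  using homeomorphism_skew by (auto simp: homeomorphism_def)

lemma cobound_Y: "cobound Y \<beta> = coboundary Y skew_inv ` carrier (CZ Y)"
  by (rule cobound_eq_coboundary[OF homeomorphism_skew])

lemma cobound_X: "cobound X \<alpha> = coboundary X \<alpha>inv ` carrier (CZ X)"
  by (rule cobound_eq_coboundary[OF homeo_\<alpha>])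

lemma lift_in_CZ: "g \<in> carrier (CZ X) \<Longrightarrow> lift g \<in> carrier (CZ Y)"
  unfolding lift_def carrier_CZ
  by (auto intro!: continuous_on_compose2[of X g] continuous_intros cong: continuous_on_cong)

lemma lift_coboundary:
  "lift (coboundary X \<alpha>inv u) = coboundary Y skew_inv (lift u)"
  by (auto simp: lift_def coboundary_def fun_eq_iff skew_inv_in fst_skew_inv \<alpha>inv_in)

lemma cohomologous_to_liftsI:
  assumes "h \<in> carrier (CZ Y)" "g \<in> carrier (CZ X)" "u \<in> carrier (CZ Y)"
    and "\<And>y. y \<in> Y \<Longrightarrow> h y = g (fst y) + u y - u (skew_inv y)"
  shows "h \<in> cohomologous_to_lifts"
proof -
  have "h = (\<lambda>p. coboundary Y skew_inv u p + lift g p)"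
    using assms(1,4) by (auto simp: fun_eq_iff coboundary_def lift_def carrier_CZ)
  then show ?thesis
    unfolding cohomologous_to_lifts_def using assms(2,3) by blast
qed

lemma cohomologous_to_liftsE:
  assumes "h \<in> cohomologous_to_lifts"
  obtains g u where "h \<in> carrier (CZ Y)" "g \<in> carrier (CZ X)" "u \<in> carrier (CZ Y)"
    and "\<And>y. y \<in> Y \<Longrightarrow> h y = g (fst y) + u y - u (skew_inv y)"
proof -
  obtain g u where gu: "g \<in> carrier (CZ X)" "u \<in> carrier (CZ Y)"
    and h: "h = (\<lambda>p. coboundary Y skew_inv u p + lift g p)"
    using assms unfolding cohomologous_to_lifts_def by blast
  have "h \<in> carrier (CZ Y)"
    unfolding h by (intro add_in_CZ coboundary_in_CZ[OF homeomorphism_skew] lift_in_CZ gu)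
  then show ?thesis
    using that gu by (simp add: h coboundary_def lift_def)
qed

lemma cohomologous_to_lifts_add:
  assumes "h \<in> cohomologous_to_lifts" "h' \<in> cohomologous_to_lifts"
  shows "(\<lambda>p. h p + h' p) \<in> cohomologous_to_lifts"
proof -
  obtain g u g' u' where
    h: "h \<in> carrier (CZ Y)" "g \<in> carrier (CZ X)" "u \<in> carrier (CZ Y)"
      "\<And>y. y \<in> Y \<Longrightarrow> h y = g (fst y) + u y - u (skew_inv y)" and
    h': "h' \<in> carrier (CZ Y)" "g' \<in> carrier (CZ X)" "u' \<in> carrier (CZ Y)"
      "\<And>y. y \<in> Y \<Longrightarrow> h' y = g' (fst y) + u' y - u' (skew_inv y)"
    using assms by (metis cohomologous_to_liftsE)
  show ?thesis
    by (rule cohomologous_to_liftsI[OF add_in_CZ[OF h(1) h'(1)] add_in_CZ[OF h(2) h'(2)]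
          add_in_CZ[OF h(3) h'(3)]]) (simp add: h(4) h'(4))
qed

lemma cohomologous_to_lifts_scale:
  assumes "h \<in> cohomologous_to_lifts"
  shows "(\<lambda>p. k * h p) \<in> cohomologous_to_lifts"
proof -
  obtain g u where h: "h \<in> carrier (CZ Y)" "g \<in> carrier (CZ X)" "u \<in> carrier (CZ Y)"
      "\<And>y. y \<in> Y \<Longrightarrow> h y = g (fst y) + u y - u (skew_inv y)"
    using assms by (metis cohomologous_to_liftsE)
  show ?thesis
    by (rule cohomologous_to_liftsI[OF scale_in_CZ[OF h(1)] scale_in_CZ[OF h(2)]
          scale_in_CZ[OF h(3)]]) (simp add: h(4) algebra_simps)
qed

lemma cobound_subset_cohomologous_to_lifts: "cobound Y \<beta> \<subseteq> cohomologous_to_lifts"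
proof
  fix h assume "h \<in> cobound Y \<beta>"
  then obtain u where u: "u \<in> carrier (CZ Y)" "h = coboundary Y skew_inv u"
    unfolding cobound_Y by auto
  then show "h \<in> cohomologous_to_lifts"
    using coboundary_in_CZ[OF homeomorphism_skew u(1)] zero_in_CZ
    by (intro cohomologous_to_liftsI[of h "\<lambda>x. 0" u]) (auto simp: coboundary_def)
qed

lemma subgroup_cohomologous_to_lifts: "subgroup cohomologous_to_lifts (CZ Y)"
proof (rule CZ.subgroupI)
  show "cohomologous_to_lifts \<subseteq> carrier (CZ Y)"
    by (metis cohomologous_to_liftsE subsetI)
  show "cohomologous_to_lifts \<noteq> {}"
    using cobound_subset_cohomologous_to_lifts
      subgroup.one_closed[OF subgroup_cobound[OF homeomorphism_skew]]
    by blast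
next
  fix h assume h: "h \<in> cohomologous_to_lifts"
  then have "h \<in> carrier (CZ Y)"
    by (rule cohomologous_to_liftsE)
  then have "inv\<^bsub>CZ Y\<^esub> h = (\<lambda>p. (-1) * h p)"
    using scale_in_CZ[of h Y "-1"] by (intro CZ.inv_equality) auto
  then show "inv\<^bsub>CZ Y\<^esub> h \<in> cohomologous_to_lifts"
    using cohomologous_to_lifts_scale[OF h, of "-1"] by simp
qed (simp add: cohomologous_to_lifts_add)

lemma pistar_class:
  assumes g: "g \<in> carrier (CZ X)"
  shows "pistar X \<alpha> c m (cobound X \<alpha> #>\<^bsub>CZ X\<^esub> g) = cobound Y \<beta> #>\<^bsub>CZ Y\<^esub> lift g"
proof -
  let ?A = "cobound X \<alpha> #>\<^bsub>CZ X\<^esub> g"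
  \<comment> \<open>\<open>pistar\<close> uses an arbitrary representative \<open>g'\<close>; it differs from \<open>g\<close> by an
    \<open>\<alpha>\<close>-coboundary, whose lift is a \<open>\<beta>\<close>-coboundary.\<close>
  define g' where "g' = (SOME g. g \<in> ?A)"
  have "g \<in> ?A"
    using g subgroup_cobound[OF homeo_\<alpha>] by (rule CZ.rcos_self)
  then have "g' \<in> ?A"
    unfolding g'_def by (rule someI[of "\<lambda>g. g \<in> ?A"])
  then obtain u where u: "u \<in> carrier (CZ X)" and g': "g' = (\<lambda>x. coboundary X \<alpha>inv u x + g x)"
    unfolding r_coset_def cobound_X by auto
  have "pistar X \<alpha> c m ?A = cobound Y \<beta> #>\<^bsub>CZ Y\<^esub> lift g'"
    by (simp add: pistar_def lift_def g'_def)
  also have "lift g' = coboundary Y skew_inv (lift u) \<otimes>\<^bsub>CZ Y\<^esub> lift g"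
    by (simp add: g' flip: lift_coboundary) (auto simp: lift_def)
  also have "cobound Y \<beta> #>\<^bsub>CZ Y\<^esub> \<dots> = cobound Y \<beta> #>\<^bsub>CZ Y\<^esub> lift g"
    using subgroup_cobound[OF homeomorphism_skew] lift_in_CZ[OF u] lift_in_CZ[OF g]
    by (intro CZ.rcos_mult_absorb) (auto simp: cobound_Y)
  finally show ?thesis .
qed

lemma pistar_image_eq:
  "pistar_image X \<alpha> c m = (\<lambda>w. cobound Y \<beta> #>\<^bsub>CZ Y\<^esub> w) ` cohomologous_to_lifts"
proof -
  have "pistar_image X \<alpha> c m = (\<lambda>g. cobound Y \<beta> #>\<^bsub>CZ Y\<^esub> lift g) ` carrier (CZ X)"
    unfolding pistar_image_def K0_def carrier_FactGroup image_image
    by (intro image_cong refl pistar_class)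
  also have "\<dots> = (\<lambda>w. cobound Y \<beta> #>\<^bsub>CZ Y\<^esub> w) ` cohomologous_to_lifts"
  proof -
    have "cobound Y \<beta> #>\<^bsub>CZ Y\<^esub> (\<lambda>p. coboundary Y skew_inv u p + lift g p)
        = cobound Y \<beta> #>\<^bsub>CZ Y\<^esub> lift g" if "g \<in> carrier (CZ X)" "u \<in> carrier (CZ Y)" for g u
      using subgroup_cobound[OF homeomorphism_skew] that lift_in_CZ[OF that(1)]
      by (subst CZ.rcos_mult_absorb[symmetric]) (auto simp: cobound_Y)
    moreover have "lift g = (\<lambda>p. coboundary Y skew_inv (\<lambda>p. 0) p + lift g p)" for g
      by (simp add: coboundary_def fun_eq_iff)
    ultimately show ?thesis
      unfolding cohomologous_to_lifts_def using zero_in_CZ by (auto simp: image_iff)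
  qed
  finally show ?thesis .
qed

lemma invariant_imp_constant:
  fixes w :: "'a \<times> int \<Rightarrow> 'b::t1_space"
  assumes w: "continuous_on Y w" and invariant: "\<And>y. y \<in> Y \<Longrightarrow> w (skew_inv y) = w y"
    and "y \<in> Y" "y' \<in> Y"
  shows "w y = w y'"
proof -
  define F where "F = {y \<in> Y. w y = w y'}"
  have "closedin (top_of_set Y) F"
    unfolding F_def using w by (rule continuous_closedin_preimage_constant)
  moreover have "\<beta> ` F = F"
  proof
    show "\<beta> ` F \<subseteq> F"
      using invariant skew_in skew_inv_skew by (fastforce simp: F_def)
    show "F \<subseteq> \<beta> ` F"
    proof
      fix y assume "y \<in> F"
      then have "skew_inv y \<in> F" "y = \<beta> (skew_inv y)"
        using invariant skew_inv_in skew_skew_inv by (auto simp: F_def)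
      then show "y \<in> \<beta> ` F"
        by blast
    qed
  qed
  ultimately have "F = {} \<or> F = Y"
    using minimal_skew unfolding minimal_homeo_def F_def by blast
  then show ?thesis
    using assms(3,4) by (auto simp: F_def)
qed

lemma rotate_in: "y \<in> Y \<Longrightarrow> rotate y \<in> Y"
  using m_pos by (auto simp: rotate_def Zm_def)

lemma fst_rotate [simp]: "fst (rotate y) = fst y"
  by (simp add: rotate_def split: prod.splits)

lemma skew_inv_rotate: "skew_inv (rotate y) = rotate (skew_inv y)"
  by (simp add: skew_inv_def rotate_def mod_diff_left_eq mod_add_left_eq diff_add_eq
      split: prod.splits)

lemma continuous_rotate: "continuous_on Y rotate"
proof -
  have "continuous_on Y (\<lambda>y. (snd y + 1) mod int m)"
    by (rule continuous_on_int_compose[where h = "\<lambda>k. (k + 1) mod int m"]) (intro continuous_intros)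
  then show ?thesis
    unfolding rotate_def by (simp add: case_prod_unfold continuous_on_Pair continuous_on_fst)
qed

lemma cocycle_imp_constant_rotation_increment:
  fixes v :: "'a \<times> int \<Rightarrow> int" and G :: "'a \<Rightarrow> int" and n :: int
  assumes v: "continuous_on Y v" and cocycle: "\<And>y. y \<in> Y \<Longrightarrow> n dvd v y - v (skew_inv y) - G (fst y)"
  obtains t where "\<And>y. y \<in> Y \<Longrightarrow> n dvd v (rotate y) - v y - t"
proof -
  define w where "w y = (v (rotate y) - v y) mod n" for y
  have "continuous_on Y (\<lambda>y. v (rotate y))"
    using continuous_on_compose2[OF v continuous_rotate] rotate_in by blast
  then have continuous_w: "continuous_on Y w"
    unfolding w_def using v by (rule continuous_on_int_binop)
  have invariant_w: "w (skew_inv y) = w y" if y: "y \<in> Y" for y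
  proof -
    \<comment> \<open>\<open>rotate\<close> commutes with \<open>skew_inv\<close> and does not move \<open>G \<circ> fst\<close>.\<close>
    have "n dvd (v (rotate y) - v (skew_inv (rotate y)) - G (fst y))
        - (v y - v (skew_inv y) - G (fst y))"
      using dvd_diff[OF cocycle[OF rotate_in[OF y]] cocycle[OF y]] by simp
    then show ?thesis
      unfolding w_def skew_inv_rotate by (simp add: mod_eq_dvd_iff algebra_simps dvd_diff_commute)
  qed
  obtain x0 where "x0 \<in> X"
    using X_nonempty by blast
  then have y0: "(x0, 0) \<in> Y"
    using m_pos by (simp add: Zm_def)
  have "w y = w (x0, 0)" if "y \<in> Y" for y
    using invariant_imp_constant[OF continuous_w invariant_w that y0] .
  then have "n dvd v (rotate y) - v y - w (x0, 0)" if "y \<in> Y" for y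
    using that dvd_minus_mod[of n "v (rotate y) - v y"] by (simp add: w_def)
  then show thesis
    by (rule that)
qed

lemma cocycle_imp_fiberwise_affine:
  fixes v :: "'a \<times> int \<Rightarrow> int" and G :: "'a \<Rightarrow> int" and n :: int
  assumes v: "continuous_on Y v" and cocycle: "\<And>y. y \<in> Y \<Longrightarrow> n dvd v y - v (skew_inv y) - G (fst y)"
  obtains t where "n dvd int m * t" and "\<And>x k. (x, k) \<in> Y \<Longrightarrow> n dvd v (x, k) - v (x, 0) - k * t"
proof -
  obtain t where step: "\<And>y. y \<in> Y \<Longrightarrow> n dvd v (rotate y) - v y - t"
    using cocycle_imp_constant_rotation_increment[OF v cocycle] by blast
  have increments: "n dvd v (x, int j) - v (x, 0) - int j * t" if "x \<in> X" "j < m" for x j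
    using that(2)
  proof (induction j)
    case (Suc j)
    then have "rotate (x, int j) = (x, int j + 1)" "(x, int j) \<in> Y"
      using that(1) by (auto simp: rotate_def Zm_def)
    then show ?case
      using dvd_add[OF Suc.IH step[of "(x, int j)"]] Suc.prems by (simp add: algebra_simps)
  qed simp
  obtain x0 where x0: "x0 \<in> X"
    using X_nonempty by blast
  show thesis
  proof
    have "rotate (x0, int m - 1) = (x0, 0)" "(x0, int m - 1) \<in> Y"
      using x0 m_pos by (auto simp: rotate_def Zm_def)
    then have "n dvd (v (x0, int (m - 1)) - v (x0, 0) - int (m - 1) * t)
        + (v (x0, 0) - v (x0, int m - 1) - t)"
      using increments[OF x0, of "m - 1"] step[of "(x0, int m - 1)"] m_pos by (intro dvd_add) auto
    then show "n dvd int m * t"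
      using m_pos by (simp add: of_nat_diff algebra_simps)
    show "n dvd v (x, k) - v (x, 0) - k * t" if "(x, k) \<in> Y" for x k
      using increments[of x "nat k"] that by (auto simp: Zm_def)
  qed
qed

lemma continuous_c_\<alpha>inv: "continuous_on X (\<lambda>x. c (\<alpha>inv x))"
  using continuous_on_compose2[OF continuous_c continuous_\<alpha>inv] \<alpha>inv_in by blast

definition c_\<alpha>inv :: "'a \<Rightarrow> int" where
  "c_\<alpha>inv x = (if x \<in> X then c (\<alpha>inv x) else 0)"

lemma c_\<alpha>inv_in_CZ: "c_\<alpha>inv \<in> carrier (CZ X)"
  unfolding c_\<alpha>inv_def by (rule restrict_in_CZ[OF continuous_c_\<alpha>inv])

definition zero_section :: "('a \<times> int \<Rightarrow> int) \<Rightarrow> 'a \<Rightarrow> int" where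
  "zero_section u x = (if x \<in> X then u (x, 0) else 0)"

lemma zero_section_in_CZ: "u \<in> carrier (CZ Y) \<Longrightarrow> zero_section u \<in> carrier (CZ X)"
  unfolding zero_section_def
  by (rule restrict_in_CZ, rule continuous_on_compose2[of Y u])
    (use m_pos in \<open>auto simp: Zm_def carrier_CZ intro!: continuous_intros\<close>)

lemma fiberwise_affine_decomposition:
  assumes u: "u \<in> carrier (CZ Y)"
    and affine: "\<And>x k. (x, k) \<in> Y \<Longrightarrow> n dvd u (x, k) - u (x, 0) - k * t"
  obtains z where "z \<in> carrier (CZ Y)"
    and "\<And>y. y \<in> Y \<Longrightarrow> u y = zero_section u (fst y) + snd y * t + n * z y"
proof
  define r where "r p = (if p \<in> Y then snd p * t else 0)" for p
  have "r \<in> carrier (CZ Y)"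
    unfolding r_def
    by (intro restrict_in_CZ continuous_on_int_compose[where h = "\<lambda>k. k * t"] continuous_intros)
  then show "(\<lambda>p. (u p - lift (zero_section u) p - r p) div n) \<in> carrier (CZ Y)"
    by (intro div_in_CZ diff_in_CZ u lift_in_CZ zero_section_in_CZ)
  show "u y = zero_section u (fst y) + snd y * t
      + n * ((u y - lift (zero_section u) y - r y) div n)"
    if "y \<in> Y" for y
    using that affine[of "fst y" "snd y"] by (auto simp: lift_def zero_section_def r_def)
qed

definition f0 :: "'a \<times> int \<Rightarrow> int" where
  "f0 = (\<lambda>(x, k). if (x, k) \<in> X \<times> Zm m \<and> c (\<alpha>inv x) \<noteq> 0 \<and> k \<in> {0..<c (\<alpha>inv x)} then 1 else 0)"

lemma f0_eq: "y \<in> Y \<Longrightarrow> f0 y = (if snd y < c (\<alpha>inv (fst y)) then 1 else 0)"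
  by (cases y) (auto simp: f0_def Zm_def)

lemma f0_in_CZ: "f0 \<in> carrier (CZ Y)"
proof -
  have "continuous_on Y (\<lambda>p. c (\<alpha>inv (fst p)))"
    using continuous_on_compose2[OF continuous_c_\<alpha>inv continuous_on_fst[OF continuous_on_id], of Y]
    by auto
  then have "continuous_on Y (\<lambda>p. if snd p < c (\<alpha>inv (fst p)) then 1 else 0 :: int)"
    by (intro continuous_on_int_binop[where h = "\<lambda>a b. if a < b then 1 else 0"] continuous_intros)
  then have "(\<lambda>p. if p \<in> Y then if snd p < c (\<alpha>inv (fst p)) then 1 else 0 else 0) \<in> carrier (CZ Y)"
    by (rule restrict_in_CZ)
  also have "(\<lambda>p. if p \<in> Y then if snd p < c (\<alpha>inv (fst p)) then 1 else 0 else 0) = f0"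
    by (auto simp: fun_eq_iff f0_eq) (auto simp: f0_def)
  finally show ?thesis .
qed

lemma m_f0_eq:
  assumes "y \<in> Y"
  shows "int m * f0 y = c (\<alpha>inv (fst y)) - snd y + snd (skew_inv y)"
proof -
  obtain x k where y: "y = (x, k)" and x: "x \<in> X" and k: "0 \<le> k" "k < int m"
    using assms by (cases y) (auto simp: Zm_def)
  define d where "d = c (\<alpha>inv x)"
  have d: "0 \<le> d" "d < int m"
    unfolding d_def using c_bounds[OF \<alpha>inv_in[OF x]] by auto
  have "snd (skew_inv y) = (k - d) mod int m"
    by (simp add: y skew_inv_def d_def)
  also have "\<dots> = (if d \<le> k then k - d else k - d + int m)"
  proof (cases "d \<le> k")
    case False
    have "(k - d) mod int m = (k - d + int m) mod int m"
      by simp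
    also have "\<dots> = k - d + int m"
      using k d False by (intro mod_pos_pos_trivial) auto
    finally show ?thesis
      using False by simp
  qed (use k d in \<open>simp add: mod_pos_pos_trivial\<close>)
  finally show ?thesis
    using assms by (simp add: f0_eq y d_def)
qed

lemma m_f0_cohomologous: "(\<lambda>p. int m * f0 p) \<in> cohomologous_to_lifts"
proof (rule cohomologous_to_liftsI)
  show "(\<lambda>p. int m * f0 p) \<in> carrier (CZ Y)"
    by (rule scale_in_CZ[OF f0_in_CZ])
  show "c_\<alpha>inv \<in> carrier (CZ X)"
    by (rule c_\<alpha>inv_in_CZ)
  show "(\<lambda>p. if p \<in> Y then - snd p else 0) \<in> carrier (CZ Y)"
    by (intro restrict_in_CZ continuous_on_int_compose[where h = uminus] continuous_intros)
  show "int m * f0 y = c_\<alpha>inv (fst y)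
      + (if y \<in> Y then - snd y else 0) - (if skew_inv y \<in> Y then - snd (skew_inv y) else 0)"
    if "y \<in> Y" for y
    using that m_f0_eq[OF that] skew_inv_in[OF that] by (auto simp: c_\<alpha>inv_def)
qed

lemma f0_multiple_cohomologous_imp_zero:
  assumes i: "i < m" and cohom: "(\<lambda>p. int i * f0 p) \<in> cohomologous_to_lifts"
  shows "i = 0"
proof (cases "m = 1")
  case False
  obtain g u where g: "g \<in> carrier (CZ X)" and u: "u \<in> carrier (CZ Y)"
    and eq: "\<And>y. y \<in> Y \<Longrightarrow> int i * f0 y = g (fst y) + u y - u (skew_inv y)"
    using cohom by (metis cohomologous_to_liftsE)
  \<comment> \<open>By \<open>m_f0_eq\<close>, \<open>v\<close> satisfies the cocycle relation exactly, i.e. modulo \<open>0\<close>.\<close>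
  define v where "v p = int m * u p + int i * snd p" for p
  have "continuous_on Y v"
    unfolding v_def
    by (rule continuous_on_int_binop[where h = "\<lambda>a b. int m * a + int i * b"])
      (use u in \<open>auto simp: carrier_CZ intro: continuous_intros\<close>)
  moreover have "0 dvd v y - v (skew_inv y) - (int i * c (\<alpha>inv (fst y)) - int m * g (fst y))"
    if "y \<in> Y" for y
  proof -
    have "v y - v (skew_inv y)
        = int m * (u y - u (skew_inv y)) + int i * (snd y - snd (skew_inv y))"
      by (simp add: v_def algebra_simps)
    also have "\<dots> = int m * (int i * f0 y - g (fst y)) + int i * (c (\<alpha>inv (fst y)) - int m * f0 y)"
      using eq[OF that] m_f0_eq[OF that] by simp
    finally show ?thesis
      by (simp add: algebra_simps)
  qed
  ultimately obtain t where t: "0 dvd int m * t"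
    and const: "\<And>x k. (x, k) \<in> Y \<Longrightarrow> 0 dvd v (x, k) - v (x, 0) - k * t"
    using cocycle_imp_fiberwise_affine[where G = "\<lambda>x. int i * c (\<alpha>inv x) - int m * g x"] by blast
  obtain x0 where x0: "x0 \<in> X"
    using X_nonempty by blast
  have "v (x0, 1) = v (x0, 0)"
    using const[of x0 1] t x0 False m_pos by (simp add: Zm_def)
  then have "int i = int m * (u (x0, 0) - u (x0, 1))"
    unfolding v_def by (simp add: algebra_simps)
  then show "i = 0"
    using i by (metis dvd_triv_left int_dvd_int_iff nat_dvd_not_less neq0_conv)
qed (use i in simp)

lemma multiple_cohomologous_imp_shift_cohomologous:
  assumes f: "f \<in> carrier (CZ Y)" and n: "n > 0"
    and cohom: "(\<lambda>p. int n * f p) \<in> cohomologous_to_lifts"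
  obtains s where "(\<lambda>p. f p + s * f0 p) \<in> cohomologous_to_lifts"
proof -
  obtain g u where g: "g \<in> carrier (CZ X)" and u: "u \<in> carrier (CZ Y)"
    and eq: "\<And>y. y \<in> Y \<Longrightarrow> int n * f y = g (fst y) + u y - u (skew_inv y)"
    using cohom by (metis cohomologous_to_liftsE)
  have cocycle: "int n dvd u y - u (skew_inv y) - (- g (fst y))" if "y \<in> Y" for y
  proof -
    have "u y - u (skew_inv y) - (- g (fst y)) = int n * f y"
      using eq[OF that] by simp
    then show ?thesis
      by simp
  qed
  then obtain t where t: "int n dvd int m * t"
    and affine: "\<And>x k. (x, k) \<in> Y \<Longrightarrow> int n dvd u (x, k) - u (x, 0) - k * t"
    using u cocycle_imp_fiberwise_affine[where G = "\<lambda>x. - g x", OF _ cocycle]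
    by (auto simp: carrier_CZ)
  obtain s where s: "int m * t = int n * s"
    using t by (auto simp: dvd_def)
  obtain z where z: "z \<in> carrier (CZ Y)"
    and u_split: "\<And>y. y \<in> Y \<Longrightarrow> u y = zero_section u (fst y) + snd y * t + int n * z y"
    using fiberwise_affine_decomposition[OF u affine] by blast
  define G where "G x = g x + coboundary X \<alpha>inv (zero_section u) x + t * c_\<alpha>inv x" for x
  have "G \<in> carrier (CZ X)"
    unfolding G_def
    by (intro add_in_CZ scale_in_CZ g coboundary_in_CZ[OF homeo_\<alpha>] zero_section_in_CZ u
        c_\<alpha>inv_in_CZ)
  then have G_div: "(\<lambda>x. G x div int n) \<in> carrier (CZ X)"
    by (rule div_in_CZ)
  have G_eq: "G (fst y) = int n * (f y + s * f0 y - z y + z (skew_inv y))" if "y \<in> Y" for y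
  proof -
    have "int n * (s * f0 y) = t * (c (\<alpha>inv (fst y)) - snd y + snd (skew_inv y))"
      using m_f0_eq[OF that] s by (metis mult.assoc mult.commute)
    then show ?thesis
      using that eq[OF that] u_split[OF that] u_split[OF skew_inv_in[OF that]] \<alpha>inv_in
      by (simp add: G_def zero_section_def coboundary_def c_\<alpha>inv_def fst_skew_inv mem_Times_iff
          algebra_simps)
  qed
  have "(\<lambda>p. f p + s * f0 p) \<in> cohomologous_to_lifts"
  proof (rule cohomologous_to_liftsI[OF add_in_CZ[OF f scale_in_CZ[OF f0_in_CZ]] G_div z])
    show "f y + s * f0 y = G (fst y) div int n + z y - z (skew_inv y)" if "y \<in> Y" for y
      using G_eq[OF that] n by simp
  qed
  then show thesis
    by (rule that)
qed

lemma shift_cohomologous_imp_bounded_shift: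
  assumes f: "f \<in> carrier (CZ Y)" and cohom: "(\<lambda>p. f p + s * f0 p) \<in> cohomologous_to_lifts"
  obtains i where "i < m" "(\<lambda>p. f p - int i * f0 p) \<in> cohomologous_to_lifts"
proof
  define i where "i = nat ((- s) mod int m)"
  show "i < m"
    using m_pos by (simp add: i_def nat_less_iff)
  have "int m dvd s + int i"
    using m_pos by (simp add: i_def mod_add_right_eq mod_0_imp_dvd)
  then obtain q where q: "s + int i = int m * q"
    by (auto simp: dvd_def)
  have "(\<lambda>p. (f p + s * f0 p) + (- q) * (int m * f0 p)) \<in> cohomologous_to_lifts"
    by (rule cohomologous_to_lifts_add[OF cohom cohomologous_to_lifts_scale[OF m_f0_cohomologous]])
  moreover have "(\<lambda>p. (f p + s * f0 p) + (- q) * (int m * f0 p)) = (\<lambda>p. f p - int i * f0 p)"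
  proof
    fix p
    have "s - int m * q = - int i"
      using q by simp
    then have "(s - int m * q) * f0 p = - int i * f0 p"
      by simp
    then show "(f p + s * f0 p) + (- q) * (int m * f0 p) = f p - int i * f0 p"
      by (simp add: algebra_simps)
  qed
  ultimately show "(\<lambda>p. f p - int i * f0 p) \<in> cohomologous_to_lifts"
    by (simp only:)
qed

lemma qclass_quotient_map:
  shows "comm_group (Kquot X \<alpha> c m)" and "group_hom (CZ Y) (Kquot X \<alpha> c m) (qclass X \<alpha> c m)"
    and "qclass X \<alpha> c m ` carrier (CZ Y) = carrier (Kquot X \<alpha> c m)"
    and "kernel (CZ Y) (Kquot X \<alpha> c m) (qclass X \<alpha> c m) = cohomologous_to_lifts"
proof -
  let ?H = "cobound Y \<beta>" and ?W = cohomologous_to_lifts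
  have Q: "Kquot X \<alpha> c m = (CZ Y Mod ?H) Mod ((\<lambda>w. ?H #>\<^bsub>CZ Y\<^esub> w) ` ?W)"
    by (simp add: Kquot_def K0_def pistar_image_eq)
  have \<phi>: "qclass X \<alpha> c m
      = (\<lambda>f. ((\<lambda>w. ?H #>\<^bsub>CZ Y\<^esub> w) ` ?W) #>\<^bsub>CZ Y Mod ?H\<^esub> (?H #>\<^bsub>CZ Y\<^esub> f))"
    by (simp add: qclass_def K0_def pistar_image_eq fun_eq_iff)
  note quotient = CZ.double_quotient[OF subgroup_cobound[OF homeomorphism_skew]
      subgroup_cohomologous_to_lifts cobound_subset_cohomologous_to_lifts, folded Q \<phi>]
  show "comm_group (Kquot X \<alpha> c m)" and "group_hom (CZ Y) (Kquot X \<alpha> c m) (qclass X \<alpha> c m)"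
    and "qclass X \<alpha> c m ` carrier (CZ Y) = carrier (Kquot X \<alpha> c m)"
    and "kernel (CZ Y) (Kquot X \<alpha> c m) (qclass X \<alpha> c m) = cohomologous_to_lifts"
    by (fact quotient)+
qed

lemma qclass_nat_pow:
  assumes "f \<in> carrier (CZ Y)"
  shows "qclass X \<alpha> c m f [^]\<^bsub>Kquot X \<alpha> c m\<^esub> n = qclass X \<alpha> c m (\<lambda>p. int n * f p)"
  using group_hom.hom_nat_pow[OF qclass_quotient_map(2) assms, of n] by (simp add: nat_pow_CZ)

lemma qclass_eq_one_iff:
  assumes "f \<in> carrier (CZ Y)"
  shows "qclass X \<alpha> c m f = \<one>\<^bsub>Kquot X \<alpha> c m\<^esub> \<longleftrightarrow> f \<in> cohomologous_to_lifts"
  using assms qclass_quotient_map(4) by (auto simp: kernel_def)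

lemma qclass_eqI:
  assumes f: "f \<in> carrier (CZ Y)" and g: "g \<in> carrier (CZ Y)"
    and "(\<lambda>p. f p - g p) \<in> cohomologous_to_lifts"
  shows "qclass X \<alpha> c m f = qclass X \<alpha> c m g"
proof -
  interpret \<phi>: group_hom "CZ Y" "Kquot X \<alpha> c m" "qclass X \<alpha> c m"
    by (rule qclass_quotient_map(2))
  have "qclass X \<alpha> c m f
      = qclass X \<alpha> c m (\<lambda>p. f p - g p) \<otimes>\<^bsub>Kquot X \<alpha> c m\<^esub> qclass X \<alpha> c m g"
    using \<phi>.hom_mult[OF diff_in_CZ[OF f g] g] by simp
  then show ?thesis
    using assms by (simp add: qclass_eq_one_iff diff_in_CZ)
qed

theorem torsion_Kquot:
  "torsion (Kquot X \<alpha> c m) \<cong> integer_mod_group m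
   \<and> qclass X \<alpha> c m f0 \<in> carrier (torsion (Kquot X \<alpha> c m))
   \<and> generate (torsion (Kquot X \<alpha> c m)) {qclass X \<alpha> c m f0} = carrier (torsion (Kquot X \<alpha> c m))"
proof -
  let ?Q = "Kquot X \<alpha> c m" and ?\<phi> = "qclass X \<alpha> c m"
  interpret Q: comm_group ?Q
    by (rule qclass_quotient_map(1))
  have f0: "?\<phi> f0 \<in> carrier ?Q"
    using qclass_quotient_map(3) f0_in_CZ by blast
  have f0_i: "(\<lambda>p. int i * f0 p) \<in> carrier (CZ Y)" for i
    by (rule scale_in_CZ[OF f0_in_CZ])
  have "Q.ord (?\<phi> f0) = m"
    using f0 m_pos m_f0_cohomologous f0_multiple_cohomologous_imp_zero
    by (intro Q.ord_eqI) (auto simp: qclass_nat_pow qclass_eq_one_iff f0_i f0_in_CZ)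
  moreover have "x \<in> range (\<lambda>i::int. ?\<phi> f0 [^]\<^bsub>?Q\<^esub> i)"
    if x: "x \<in> carrier ?Q" and n: "n > 0" and "x [^]\<^bsub>?Q\<^esub> n = \<one>\<^bsub>?Q\<^esub>" for x and n :: nat
  proof -
    obtain f where f: "f \<in> carrier (CZ Y)" and x: "x = ?\<phi> f"
      using x qclass_quotient_map(3) by blast
    then have "(\<lambda>p. int n * f p) \<in> cohomologous_to_lifts"
      using that by (simp add: qclass_nat_pow qclass_eq_one_iff scale_in_CZ)
    then obtain s where "(\<lambda>p. f p + s * f0 p) \<in> cohomologous_to_lifts"
      by (rule multiple_cohomologous_imp_shift_cohomologous[OF f n])
    then obtain i where "(\<lambda>p. f p - int i * f0 p) \<in> cohomologous_to_lifts"
      by (rule shift_cohomologous_imp_bounded_shift[OF f])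
    then have "x = ?\<phi> f0 [^]\<^bsub>?Q\<^esub> i"
      using qclass_eqI[OF f f0_i] by (simp add: x qclass_nat_pow[OF f0_in_CZ])
    then show ?thesis
      by (metis int_pow_int rangeI)
  qed
  ultimately show ?thesis
    using Q.torsion_cyclic_of_order[OF f0 _ m_pos] by blast
qed

end

theorem lemma4p5:
  fixes X :: "'a::metric_space set" and \<alpha> \<alpha>inv :: "'a \<Rightarrow> 'a" and c :: "'a \<Rightarrow> int" and m :: nat
  assumes "cantor_set X"
    and "homeomorphism X X \<alpha> \<alpha>inv"
    and "minimal_homeo X \<alpha>"
    and "m \<ge> 1"
    and "continuous_on X c" and "c ` X \<subseteq> Zm m"
    and "minimal_homeo (X \<times> Zm m) (skew \<alpha> c m)"
  shows "torsion (Kquot X \<alpha> c m) \<cong> integer_mod_group m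
     \<and> qclass X \<alpha> c m
         (\<lambda>(x,k). if (x,k) \<in> X \<times> Zm m \<and> c (\<alpha>inv x) \<noteq> 0 \<and> k \<in> {0..<c (\<alpha>inv x)} then 1 else 0)
         \<in> carrier (torsion (Kquot X \<alpha> c m))
     \<and> generate (torsion (Kquot X \<alpha> c m))
         {qclass X \<alpha> c m
           (\<lambda>(x,k). if (x,k) \<in> X \<times> Zm m \<and> c (\<alpha>inv x) \<noteq> 0 \<and> k \<in> {0..<c (\<alpha>inv x)} then 1 else 0)}
       = carrier (torsion (Kquot X \<alpha> c m))"
proof -
  interpret skew_product X \<alpha> \<alpha>inv c m
    using assms by unfold_locales (auto simp: cantor_set_def)
  show ?thesis
    using torsion_Kquot unfolding f0_def .
qed

end
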